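(* Let $A$ be a circular $m\times n$ matrix with no dominating rows, and let $\Gamma$ be a circuit in $F(A)$ with winding number $p$ and $s$ row arcs. Let $L\subseteq[n]$ be the set of essential bullets of $\Gamma$ and $F\subseteq[m]$ the set of rows $i$ of $A$ whose row arc $a_i$ belongs to $\Gamma$. Then the submatrix of $A$ induced by the rows in $F$ and the columns in $L$ is isomorphic (up to row and column permutations) to the circulant matrix $C_s^p$, and $\gcd(s,p)=1$.
   Context: Notation: $[n]=\{1,\dots,n\}$ with addition mod $n$ (index $0$ identified with $n$); for $a,c\in[n]$ with $t\ge0$ minimal such that $a+t\equiv c\pmod n$, $[a,c)_n=\{a,\dots,a+t-1\}$ (mod $n$). An $m\times n$ $\{0,1\}$-matrix $A=(a_{ij})$ is circular if for each row $i$ there are $\ell_i\in[n]$ and an integer $2\le k_i\le n-1$ with row $i$ the incidence vector of $[\ell_i,\ell_i+k_i)_n$. Row $i$ dominates row $\ell\ne i$ if $a_{ij}\ge a_{\ell j}$ for all $j$. $C_s^p$ is the $s\times s$ matrix whose row $i$ is the incidence vector of $[i,i+p)_s$. $F(A)$: digraph on $[n]$ (labels mod $n$) with row arcs $a_i=(\ell_i-1,\ell_i+k_i-1)$ ($i\in[m]$, length $k_i$), forward short arcs $(j-1,j)$ (length $1$), reverse short arcs $(j,j-1)$ (length $-1$). A circuit is a simple directed circuit; winding number $p(\Gamma)$: $p(\Gamma)n=$ sum of its arc lengths. For a circuit $\Gamma$: $\circ(\Gamma)=\{j:(j-1,j)\in E(\Gamma)\}$, $\otimes(\Gamma)=\{j:(j,j-1)\in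 E(\Gamma)\}$, bullets $\bullet(\Gamma)=[n]\setminus(\circ(\Gamma)\cup\otimes(\Gamma))$; essential bullets are bullets that are nodes of $\Gamma$. *)

theory Defs
  imports Main
begin

text \<open>Representative in [n] = {1..n} of an integer modulo n (0 is identified with n).\<close>
definition cyc :: "nat \<Rightarrow> int \<Rightarrow> nat" where
  "cyc n x = nat ((x - 1) mod int n) + 1"

definition circ_interval :: "nat \<Rightarrow> nat \<Rightarrow> nat \<Rightarrow> nat set" where
  "circ_interval n a k = {cyc n (int a + int t) | t. t < k}"

text \<open>A (m x n) {0,1}-matrix A (entries as booleans, rows 1..m, columns 1..n) is circular,
  row i being the incidence vector of [l i, l i + k i)_n with l i in [n] and 2 <= k i <= n-1.
  The data l, k are uniquely determined by A.\<close>
definition circular_with ::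
  "nat \<Rightarrow> nat \<Rightarrow> (nat \<Rightarrow> nat \<Rightarrow> bool) \<Rightarrow> (nat \<Rightarrow> nat) \<Rightarrow> (nat \<Rightarrow> nat) \<Rightarrow> bool" where
  "circular_with m n A l k \<longleftrightarrow>
     (\<forall>i\<in>{1..m}. l i \<in> {1..n} \<and> 2 \<le> k i \<and> k i \<le> n - 1 \<and>
        (\<forall>j\<in>{1..n}. A i j \<longleftrightarrow> j \<in> circ_interval n (l i) (k i)))"

definition dominates :: "nat \<Rightarrow> (nat \<Rightarrow> nat \<Rightarrow> bool) \<Rightarrow> nat \<Rightarrow> nat \<Rightarrow> bool" where
  "dominates n A i i' \<longleftrightarrow> (\<forall>j\<in>{1..n}. A i' j \<longrightarrow> A i j)"

definition no_dominating_rows :: "nat \<Rightarrow> nat \<Rightarrow> (nat \<Rightarrow> nat \<Rightarrow> bool) \<Rightarrow> bool" where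
  "no_dominating_rows m n A \<longleftrightarrow>
     (\<forall>i\<in>{1..m}. \<forall>i'\<in>{1..m}. i \<noteq> i' \<longrightarrow> \<not> dominates n A i i')"

text \<open>Arcs of the multi-digraph F(A): row arcs a_i, forward short arcs (j-1,j),
  reverse short arcs (j,j-1).\<close>
datatype arc = RowArc nat | Fwd nat | Rev nat

fun arc_tail :: "nat \<Rightarrow> (nat \<Rightarrow> nat) \<Rightarrow> (nat \<Rightarrow> nat) \<Rightarrow> arc \<Rightarrow> nat" where
  "arc_tail n l k (RowArc i) = cyc n (int (l i) - 1)"
| "arc_tail n l k (Fwd j) = cyc n (int j - 1)"
| "arc_tail n l k (Rev j) = cyc n (int j)"

fun arc_head :: "nat \<Rightarrow> (nat \<Rightarrow> nat) \<Rightarrow> (nat \<Rightarrow> nat) \<Rightarrow> arc \<Rightarrow> nat" where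
  "arc_head n l k (RowArc i) = cyc n (int (l i) + int (k i) - 1)"
| "arc_head n l k (Fwd j) = cyc n (int j)"
| "arc_head n l k (Rev j) = cyc n (int j - 1)"

fun arc_length :: "(nat \<Rightarrow> nat) \<Rightarrow> arc \<Rightarrow> int" where
  "arc_length k (RowArc i) = int (k i)"
| "arc_length k (Fwd j) = 1"
| "arc_length k (Rev j) = -1"

definition F_arcs :: "nat \<Rightarrow> nat \<Rightarrow> arc set" where
  "F_arcs m n = RowArc ` {1..m} \<union> Fwd ` {1..n} \<union> Rev ` {1..n}"

text \<open>A (simple directed) circuit of F(A), given as the cyclic list of its arcs:
  consecutive arcs are linked head-to-tail (cyclically) and the visited nodes are distinct.\<close>
definition is_circuit :: "nat \<Rightarrow> nat \<Rightarrow> (nat \<Rightarrow> nat) \<Rightarrow> (nat \<Rightarrow> nat) \<Rightarrow> arc list \<Rightarrow> bool" where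
  "is_circuit m n l k G \<longleftrightarrow>
     G \<noteq> [] \<and> set G \<subseteq> F_arcs m n \<and>
     (\<forall>t < length G. arc_head n l k (G ! t) = arc_tail n l k (G ! ((t + 1) mod length G))) \<and>
     distinct (map (arc_tail n l k) G)"

definition winding_number :: "nat \<Rightarrow> (nat \<Rightarrow> nat) \<Rightarrow> arc list \<Rightarrow> int \<Rightarrow> bool" where
  "winding_number n k G p \<longleftrightarrow> sum_list (map (arc_length k) G) = p * int n"

definition circuit_nodes :: "nat \<Rightarrow> (nat \<Rightarrow> nat) \<Rightarrow> (nat \<Rightarrow> nat) \<Rightarrow> arc list \<Rightarrow> nat set" where
  "circuit_nodes n l k G = set (map (arc_tail n l k) G)"

definition circ_set :: "nat \<Rightarrow> arc list \<Rightarrow> nat set" where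
  "circ_set n G = {j\<in>{1..n}. Fwd j \<in> set G}"

definition otimes_set :: "nat \<Rightarrow> arc list \<Rightarrow> nat set" where
  "otimes_set n G = {j\<in>{1..n}. Rev j \<in> set G}"

definition bullets :: "nat \<Rightarrow> arc list \<Rightarrow> nat set" where
  "bullets n G = {1..n} - (circ_set n G \<union> otimes_set n G)"

definition essential_bullets :: "nat \<Rightarrow> (nat \<Rightarrow> nat) \<Rightarrow> (nat \<Rightarrow> nat) \<Rightarrow> arc list \<Rightarrow> nat set" where
  "essential_bullets n l k G = bullets n G \<inter> circuit_nodes n l k G"

definition row_arc_rows :: "nat \<Rightarrow> arc list \<Rightarrow> nat set" where
  "row_arc_rows m G = {i\<in>{1..m}. RowArc i \<in> set G}"

text \<open>Entry (a,b) of C_s^p (a,b in [s]): row a is the incidence vector of the p consecutive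
  indices a, a+1, ..., a+p-1 (mod s).\<close>
definition circulant :: "nat \<Rightarrow> int \<Rightarrow> nat \<Rightarrow> nat \<Rightarrow> bool" where
  "circulant s p a b \<longleftrightarrow> (int b - int a) mod int s < p"

end

theory Submission
  imports Defs
begin

(* An essential bullet is a node entered by a
  row or reverse arc and left by a row or forward arc; since a forward arc is never followed by a
  reverse arc, a telescoping count over the runs of reverse arcs shows that there are exactly as
  many essential bullets as row arcs, namely s.
  Along an arc of length L the cyclic distance from a column c to the current node grows by L, minus
  n whenever the arc passes over c. Summing around the circuit, every column is passed over p times,
  and an essential bullet only by row arcs: it is covered by exactly p rows of F.
  From a bullet the circuit runs forward to a row arc a_j, which makes the bullet the last one
  before column l_j; this is a bijection between bullets and rows of F. If row i covered more than
  p bullets, each of them but its last one b would be the last bullet before another row covering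
  b, and without dominating rows there are only p - 1 such rows. So every row covers exactly p
  bullets, namely the p bullets following its start, and the row after the bullet of rank r covers
  the ranks r+1, ..., r+p modulo s: this is C_s^p.
  Between consecutive row arcs of the circuit the rank of the start column advances by p modulo s.
  The s start ranks are thus distinct modulo s but congruent modulo gcd(s, p), forcing gcd(s, p) = 1. *)

section \<open>Cyclic arithmetic\<close>

lemma cyc_int: "n > 0 \<Longrightarrow> int (cyc n x) = (x - 1) mod int n + 1"
  unfolding cyc_def by simp

lemma cyc_in_range: "n > 0 \<Longrightarrow> cyc n x \<in> {1..n}"
proof -
  assume n: "n > 0"
  have "0 \<le> (x - 1) mod int n" "(x - 1) mod int n < int n" using n by simp_all
  then have "1 \<le> int (cyc n x)" "int (cyc n x) \<le> int n" using cyc_int[OF n, of x] by linarith+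
  then show ?thesis by simp
qed

lemma cyc_mod: "n > 0 \<Longrightarrow> int (cyc n x) mod int n = x mod int n"
proof -
  assume n: "n > 0"
  have "((x - 1) mod int n + 1) mod int n = ((x - 1) + 1) mod int n"
    by (simp add: mod_add_left_eq)
  then show ?thesis using cyc_int[OF n] by simp
qed

lemma cyc_of_nat: "c \<in> {1..n} \<Longrightarrow> cyc n (int c) = c"
proof -
  assume c: "c \<in> {1..n}"
  then have "(int c - 1) mod int n = int c - 1" by (intro mod_pos_pos_trivial) auto
  then show ?thesis unfolding cyc_def using c by auto
qed

lemma cyc_eq_cyc_iff: "n > 0 \<Longrightarrow> cyc n x = cyc n y \<longleftrightarrow> x mod int n = y mod int n"
proof
  assume n: "n > 0" and "cyc n x = cyc n y"
  then show "x mod int n = y mod int n" using cyc_mod[OF n] by metis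
next
  assume "x mod int n = y mod int n"
  then have "(x - 1) mod int n = (y - 1) mod int n" by (metis mod_diff_left_eq)
  then show "cyc n x = cyc n y" unfolding cyc_def by simp
qed

lemma cyc_eq_iff: "n > 0 \<Longrightarrow> c \<in> {1..n} \<Longrightarrow> cyc n x = c \<longleftrightarrow> x mod int n = int c mod int n"
  using cyc_eq_cyc_iff[of n x "int c"] cyc_of_nat[of c n] by simp

lemma cyc_add_cyc: "n > 0 \<Longrightarrow> cyc n (int (cyc n x) + y) = cyc n (x + y)"
  using cyc_mod[of n x] cyc_eq_cyc_iff[of n] by (metis mod_add_left_eq)

lemma eq_cyc_succ_if_cyc_pred_eq:
  assumes "n > 0" "j \<in> {1..n}" "cyc n (int j - 1) = cyc n x"
  shows "j = cyc n (x + 1)"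
  using cyc_add_cyc[OF assms(1), of "int j - 1" 1] cyc_of_nat[OF assms(2)] assms(3)
  by (simp add: cyc_add_cyc[OF assms(1), of x 1, symmetric])

definition cdist :: "nat \<Rightarrow> nat \<Rightarrow> nat \<Rightarrow> int" where
  "cdist n a c = (int c - int a) mod int n"

lemma cdist_nonneg: "n > 0 \<Longrightarrow> 0 \<le> cdist n a c"
  and cdist_less: "n > 0 \<Longrightarrow> cdist n a c < int n"
  unfolding cdist_def by simp_all

lemma cdist_self [simp]: "cdist n a a = 0"
  unfolding cdist_def by simp

lemma cdist_inj:
  assumes "b \<in> {1..n}" "c \<in> {1..n}" "cdist n a b = cdist n a c"
  shows "b = c"
proof -
  have "(int b - int a + int a) mod int n = (int c - int a + int a) mod int n"
    using assms(3) unfolding cdist_def by (metis mod_add_left_eq)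
  then show ?thesis using cyc_eq_cyc_iff[of n "int b" "int c"] cyc_of_nat assms(1,2) by simp
qed

lemma cdist_eq_0_iff: "a \<in> {1..n} \<Longrightarrow> c \<in> {1..n} \<Longrightarrow> cdist n a c = 0 \<longleftrightarrow> a = c"
  using cdist_inj[of a n c a] by auto

lemma cdist_shift: "cdist n a y = (cdist n b y - cdist n b a) mod int n"
proof -
  have "int y - int a = (int y - int b) - (int a - int b)" by simp
  then show ?thesis unfolding cdist_def by (metis mod_diff_eq)
qed

lemma cdist_add: "cdist n a y = (cdist n a b + cdist n b y) mod int n"
proof -
  have "int y - int a = (int b - int a) + (int y - int b)" by simp
  then show ?thesis unfolding cdist_def by (metis mod_add_eq)
qed

lemma cdist_cyc: "n > 0 \<Longrightarrow> cdist n a (cyc n x) = (x - int a) mod int n"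
  unfolding cdist_def using cyc_mod[of n x] by (metis mod_diff_left_eq)

lemma cyc_add_cdist: "n > 0 \<Longrightarrow> c \<in> {1..n} \<Longrightarrow> cyc n (int a + cdist n a c) = c"
  unfolding cdist_def using cyc_eq_iff[of n c]
  by (metis add.commute diff_add_cancel mod_add_left_eq)

lemma cdist_eq:
  assumes "a \<in> {1..n}" "c \<in> {1..n}"
  shows "cdist n a c = (if a \<le> c then int c - int a else int c - int a + int n)"
proof (cases "a \<le> c")
  case True
  then show ?thesis unfolding cdist_def using assms by (auto intro!: mod_pos_pos_trivial)
next
  case False
  have "(int c - int a + int n) mod int n = int c - int a + int n"
    using assms False by (intro mod_pos_pos_trivial) auto
  then show ?thesis unfolding cdist_def using False by simp
qed

lemma mem_circ_interval_iff:
  assumes n: "n > 0" and c: "c \<in> {1..n}"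
  shows "c \<in> circ_interval n a k \<longleftrightarrow> cdist n a c < int k"
proof
  assume "c \<in> circ_interval n a k"
  then obtain t where t: "t < k" "c = cyc n (int a + int t)" unfolding circ_interval_def by auto
  have "cdist n a c = int t mod int n" unfolding t(2) cdist_cyc[OF n] by simp
  also have "\<dots> \<le> int t" using n by (simp add: zmod_le_nonneg_dividend)
  finally show "cdist n a c < int k" using t by simp
next
  assume "cdist n a c < int k"
  moreover have "int (nat (cdist n a c)) = cdist n a c" using cdist_nonneg[OF n] by simp
  ultimately have "nat (cdist n a c) < k" "cyc n (int a + int (nat (cdist n a c))) = c"
    using cyc_add_cdist[OF n c, of a] by (linarith, simp)
  then show "c \<in> circ_interval n a k" unfolding circ_interval_def by force
qed

lemma mod_add_minus_mod:
  fixes y n k :: int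
  assumes n: "n > 0" and k: "0 \<le> k" "k \<le> n"
  shows "(y + k) mod n - y mod n = k - n * of_bool (n \<le> y mod n + k)"
proof -
  have y: "0 \<le> y mod n" "y mod n < n" using n by simp_all
  have e: "(y + k) mod n = (y mod n + k) mod n" by (simp add: mod_add_left_eq)
  show ?thesis
  proof (cases "n \<le> y mod n + k")
    case True
    have "(y mod n + k) mod n = (y mod n + k - n) mod n" by (simp add: mod_diff_right_eq[symmetric])
    also have "\<dots> = y mod n + k - n" using True y k by (intro mod_pos_pos_trivial) linarith+
    finally show ?thesis using e True by simp
  next
    case False
    then have "(y mod n + k) mod n = y mod n + k" using y k by (intro mod_pos_pos_trivial) auto
    then show ?thesis using e False by simp
  qed
qed

lemma minus_one_minus_mod:
  fixes y n :: int
  assumes n: "n > 0"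
  shows "(- 1 - y) mod n = n - 1 - y mod n"
proof -
  have "(- 1 - y) mod n = (- 1 - y mod n + n) mod n" by (simp add: mod_diff_right_eq)
  then have "(- 1 - y) mod n = (n - 1 - y mod n) mod n" by (simp add: algebra_simps)
  also have "\<dots> = n - 1 - y mod n"
    using n pos_mod_sign[OF n, of y] pos_mod_bound[OF n, of y] by (intro mod_pos_pos_trivial) linarith+
  finally show ?thesis .
qed

lemma cdist_cyc_step:
  assumes n: "n > 0" and L: "0 \<le> L" "L \<le> int n"
  shows "cdist n c (cyc n (int a - 1 + L)) - cdist n c (cyc n (int a - 1))
         = L - int n * of_bool (cdist n a c < L)"
proof -
  let ?y = "int a - 1 - int c"
  have "?y mod int n = int n - 1 - cdist n a c"
    unfolding cdist_def using minus_one_minus_mod[of "int n" "int c - int a"] n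
    by (simp add: algebra_simps)
  then have "(int n \<le> ?y mod int n + L) = (cdist n a c < L)" by linarith
  moreover have "cdist n c (cyc n (int a - 1 + L)) = (?y + L) mod int n"
    "cdist n c (cyc n (int a - 1)) = ?y mod int n"
    unfolding cdist_cyc[OF n] by (simp_all add: algebra_simps)
  ultimately show ?thesis using mod_add_minus_mod[OF _ L, of ?y] n by simp
qed

lemma mod_eq_if_Suc_mod_eq: "Suc a mod r = Suc b mod r \<Longrightarrow> a mod r = b mod r"
proof -
  assume h: "Suc a mod r = Suc b mod r"
  show ?thesis
  proof (cases "r = 0")
    case False
    have "(Suc a + (r - 1)) mod r = (Suc b + (r - 1)) mod r" using h by (metis mod_add_left_eq)
    moreover have "Suc a + (r - 1) = a + r" "Suc b + (r - 1) = b + r" using False by simp_all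
    ultimately show ?thesis by simp
  qed (use h in simp)
qed

lemma eq_2_if_mutual_Suc_mod:
  assumes "(a::nat) < r" "b = Suc a mod r" "a = Suc b mod r" "a \<noteq> b" shows "r = 2"
proof (cases "Suc a < r")
  case True
  then have b: "b = Suc a" using assms(2) by simp
  then have h: "Suc (Suc a) mod r = a" using assms(3) by metis
  have "Suc (Suc a) = r"
  proof (rule ccontr)
    assume "Suc (Suc a) \<noteq> r"
    then have "Suc (Suc a) mod r = Suc (Suc a)" using True by simp
    then show False using h by linarith
  qed
  then show ?thesis using h by simp
next
  case False
  then have r: "Suc a = r" using assms(1) by simp
  then have "b = 0" using assms(2) by simp
  then have "Suc 0 mod r = a" using assms(3) by metis
  then show ?thesis using assms(4) \<open>b = 0\<close> r by (cases "r = 1") auto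
qed

lemma mod_add_mod_diff_add_one: "((y::int) + (x - y) mod s + 1) mod s = (x + 1) mod s"
proof -
  have "y + (x - y) mod s + 1 = (y + 1) + (x - y) mod s" by simp
  then show ?thesis by (simp only: mod_add_right_eq) (simp add: add.commute)
qed

section \<open>Counting\<close>

lemma int_card_filter_eq_sum: "finite A \<Longrightarrow> int (card {x\<in>A. P x}) = (\<Sum>x\<in>A. of_bool (P x))"
  by (simp add: Collect_conj_eq Int_commute)

lemma bij_betw_if_card_eq:
  "finite B \<Longrightarrow> inj_on f A \<Longrightarrow> f ` A \<subseteq> B \<Longrightarrow> card A = card B \<Longrightarrow> bij_betw f A B"
  by (metis bij_betw_def card_image card_subset_eq)

lemma sum_lessThan_shift_periodic:
  fixes f :: "nat \<Rightarrow> 'a::cancel_comm_monoid_add"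
  assumes "f r = f 0"
  shows "(\<Sum>u<r. f (Suc u)) = (\<Sum>u<r. f u)"
  using sum.lessThan_Suc_shift[of f r] assms by (simp add: add.commute)

lemma bij_betw_shift_mod:
  assumes s: "0 < s"
  shows "bij_betw (\<lambda>a. nat ((int a - d) mod int s)) {1..s} {..<s}"
proof (rule bij_betw_if_card_eq)
  show "inj_on (\<lambda>a. nat ((int a - d) mod int s)) {1..s}"
  proof (rule inj_onI)
    fix a a' assume a: "a \<in> {1..s}" "a' \<in> {1..s}"
      and "nat ((int a - d) mod int s) = nat ((int a' - d) mod int s)"
    then have "(int a - d) mod int s = (int a' - d) mod int s" using s by (simp add: eq_nat_nat_iff)
    then have "(int a - d + d) mod int s = (int a' - d + d) mod int s" by (metis mod_add_left_eq)
    then have "a mod s = a' mod s" by (simp add: zmod_int[symmetric])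
    then show "a = a'" using a by (cases "a = s"; cases "a' = s") auto
  qed
qed (use s in \<open>auto simp: nat_less_iff\<close>)

lemma card_le_if_distinct_mod_and_cong:
  fixes f :: "'a \<Rightarrow> int" and s d :: int
  assumes fin: "finite R" and s: "0 < s" and d: "0 < d" "d dvd s"
    and inj: "inj_on (\<lambda>u. f u mod s) R" and cong: "\<forall>u\<in>R. f u mod d = e"
  shows "int (card R) \<le> s div d"
proof -
  define \<phi> where "\<phi> u = (f u mod s) div d" for u
  have "\<phi> ` R \<subseteq> {0..<s div d}"
  proof
    fix x assume "x \<in> \<phi> ` R"
    then obtain u where x: "x = \<phi> u" by blast
    have r: "0 \<le> f u mod s" "f u mod s < (s div d) * d" using s d by simp_all
    have "(f u mod s) div d * d \<le> f u mod s"
      using div_mult_mod_eq[of "f u mod s" d] pos_mod_sign[OF d(1), of "f u mod s"] by linarith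
    then have "(f u mod s) div d * d < (s div d) * d" using r by linarith
    then have "(f u mod s) div d < s div d" using mult_less_cancel_right_pos[OF d(1)] by blast
    then show "x \<in> {0..<s div d}"
      unfolding x \<phi>_def using r d by (simp add: pos_imp_zdiv_nonneg_iff)
  qed
  moreover have "inj_on \<phi> R"
  proof (rule inj_onI)
    fix u u' assume u: "u \<in> R" "u' \<in> R" "\<phi> u = \<phi> u'"
    have "(f u mod s) mod d = (f u' mod s) mod d"
      using cong u d by (simp add: mod_mod_cancel)
    then have "f u mod s = f u' mod s" using u(3) unfolding \<phi>_def by (metis div_mod_decomp_int)
    then show "u = u'" using inj_onD[OF inj _ u(1,2)] by simp
  qed
  ultimately have "card R \<le> card {0..<s div d}" by (intro card_inj_on_le) auto
  moreover have "0 \<le> s div d" using s d by (simp add: pos_imp_zdiv_nonneg_iff)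
  ultimately show ?thesis by simp
qed

section \<open>Circuits of \<open>F(A)\<close>\<close>

fun is_row :: "arc \<Rightarrow> bool" where "is_row (RowArc i) = True" | "is_row _ = False"
fun is_fwd :: "arc \<Rightarrow> bool" where "is_fwd (Fwd j) = True" | "is_fwd _ = False"
fun is_rev :: "arc \<Rightarrow> bool" where "is_rev (Rev j) = True" | "is_rev _ = False"
fun arc_index :: "arc \<Rightarrow> nat" where
  "arc_index (RowArc i) = i" | "arc_index (Fwd j) = j" | "arc_index (Rev j) = j"

lemma arc_kinds: "is_row e \<or> is_fwd e \<or> is_rev e"
  by (cases e) auto

locale circuit_of_circular_matrix =
  fixes m n :: nat and A :: "nat \<Rightarrow> nat \<Rightarrow> bool" and l k :: "nat \<Rightarrow> nat" and G :: "arc list"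
  assumes circ: "circular_with m n A l k"
    and circuit: "is_circuit m n l k G"
    and nondeg: "\<not> (\<exists>j. set G = {Fwd j, Rev j})"
begin

abbreviation len where "len \<equiv> length G"
abbreviation Frows where "Frows \<equiv> row_arc_rows m G"
abbreviation Lcols where "Lcols \<equiv> essential_bullets n l k G"
abbreviation s where "s \<equiv> card Frows"

definition arc_at :: "nat \<Rightarrow> arc" where "arc_at t = G ! (t mod len)"
definition node :: "nat \<Rightarrow> nat" where "node t = arc_tail n l k (arc_at t)"

definition row_positions :: "nat set" where
  "row_positions = {u. u < len \<and> is_row (arc_at u)}"

lemma len_pos: "len > 0"
  using circuit unfolding is_circuit_def by auto

lemma arc_at_in_set: "arc_at t \<in> set G"
  unfolding arc_at_def using len_pos by simp

lemma arc_at_mod: "arc_at (t mod len) = arc_at t"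
  unfolding arc_at_def by simp

lemma arc_at_eq: "a mod len = b mod len \<Longrightarrow> arc_at a = arc_at b"
  unfolding arc_at_def by simp

lemma in_set_imp_arc_at: "e \<in> set G \<Longrightarrow> \<exists>u<len. arc_at u = e"
  unfolding arc_at_def by (metis in_set_conv_nth mod_less)

lemma row_data:
  "i \<in> {1..m} \<Longrightarrow> l i \<in> {1..n} \<and> 2 \<le> k i \<and> k i \<le> n - 1 \<and>
     (\<forall>j\<in>{1..n}. A i j \<longleftrightarrow> j \<in> circ_interval n (l i) (k i))"
  using circ unfolding circular_with_def by blast

lemma arc_at_index_range:
  "arc_at t = RowArc i \<Longrightarrow> i \<in> {1..m}"
  "arc_at t = Fwd j \<Longrightarrow> j \<in> {1..n}"
  "arc_at t = Rev j \<Longrightarrow> j \<in> {1..n}"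
proof -
  have "arc_at t \<in> F_arcs m n" using arc_at_in_set[of t] circuit unfolding is_circuit_def by blast
  then show "arc_at t = RowArc i \<Longrightarrow> i \<in> {1..m}" "arc_at t = Fwd j \<Longrightarrow> j \<in> {1..n}"
    "arc_at t = Rev j \<Longrightarrow> j \<in> {1..n}" unfolding F_arcs_def by auto
qed

lemma n_pos: "n > 0"
  using arc_at_index_range[of 0] row_data by (cases "arc_at 0") fastforce+

lemma A_iff_cdist: "i \<in> {1..m} \<Longrightarrow> c \<in> {1..n} \<Longrightarrow> A i c \<longleftrightarrow> cdist n (l i) c < int (k i)"
  using row_data[of i] mem_circ_interval_iff[OF n_pos] by blast

lemma cdist_bounds: "0 \<le> cdist n a c" "cdist n a c < int n"
  using cdist_nonneg[OF n_pos] cdist_less[OF n_pos] by auto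

lemma arc_head_arc_at: "arc_head n l k (arc_at t) = node (Suc t)"
proof -
  have "arc_head n l k (G ! (t mod len)) = arc_tail n l k (G ! ((t mod len + 1) mod len))"
    using circuit len_pos unfolding is_circuit_def by simp
  moreover have "(t mod len + 1) mod len = Suc t mod len" by (simp add: mod_Suc_eq)
  ultimately show ?thesis unfolding node_def arc_at_def by simp
qed

lemma node_mod: "node (t mod len) = node t"
  unfolding node_def arc_at_mod ..

lemma node_eq_imp_mod_eq: "node a = node b \<Longrightarrow> a mod len = b mod len"
proof -
  assume h: "node a = node b"
  have d: "distinct (map (arc_tail n l k) G)" using circuit unfolding is_circuit_def by blast
  have a: "a mod len < length (map (arc_tail n l k) G)" "b mod len < length (map (arc_tail n l k) G)"
    using len_pos by simp_all
  have "map (arc_tail n l k) G ! (a mod len) = map (arc_tail n l k) G ! (b mod len)"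
    using h len_pos unfolding node_def arc_at_def by simp
  then show ?thesis using nth_eq_iff_index_eq[OF d a] by blast
qed

lemma node_Suc_inj: "node (Suc a) = node (Suc b) \<Longrightarrow> a mod len = b mod len"
  using node_eq_imp_mod_eq mod_eq_if_Suc_mod_eq by blast

lemma node_in_range: "node t \<in> {1..n}"
  unfolding node_def using cyc_in_range[OF n_pos] by (cases "arc_at t") auto

lemma node_RowArc:
  "arc_at t = RowArc i \<Longrightarrow> node t = cyc n (int (l i) - 1)"
  "arc_at t = RowArc i \<Longrightarrow> node (Suc t) = cyc n (int (l i) + int (k i) - 1)"
  using arc_head_arc_at[of t] unfolding node_def by simp_all

lemma node_Fwd:
  "arc_at t = Fwd j \<Longrightarrow> node t = cyc n (int j - 1)"
  "arc_at t = Fwd j \<Longrightarrow> node (Suc t) = j"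
  using arc_head_arc_at[of t] arc_at_index_range(2)[of t j] cyc_of_nat unfolding node_def by simp_all

lemma node_Rev:
  "arc_at t = Rev j \<Longrightarrow> node t = j"
  "arc_at t = Rev j \<Longrightarrow> node (Suc t) = cyc n (int j - 1)"
  using arc_head_arc_at[of t] arc_at_index_range(3)[of t j] cyc_of_nat unfolding node_def by simp_all

text \<open>Traversing \<open>Fwd j\<close> and \<open>Rev j\<close> would close a circuit of length two, which is excluded.\<close>
lemma not_Fwd_and_Rev_in_set: "Fwd j \<in> set G \<Longrightarrow> Rev j \<in> set G \<Longrightarrow> False"
proof -
  assume "Fwd j \<in> set G" "Rev j \<in> set G"
  then obtain a b where ab: "a < len" "b < len" "arc_at a = Fwd j" "arc_at b = Rev j"
    using in_set_imp_arc_at by metis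
  have "node b = node (Suc a)" using node_Fwd(2)[OF ab(3)] node_Rev(1)[OF ab(4)] by simp
  then have ba: "b = Suc a mod len" using node_eq_imp_mod_eq ab(2) by (metis mod_less)
  have "node a = node (Suc b)" using node_Fwd(1)[OF ab(3)] node_Rev(2)[OF ab(4)] by simp
  then have ab': "a = Suc b mod len" using node_eq_imp_mod_eq ab(1) by (metis mod_less)
  have "a \<noteq> b" using ab by auto
  then have "len = 2" using eq_2_if_mutual_Suc_mod[OF ab(1) ba ab'] by simp
  then have "set G = {G ! 0, G ! 1}" by (auto simp: set_conv_nth less_2_cases_iff)
  also have "\<dots> = {arc_at a, arc_at b}"
    using ab \<open>a \<noteq> b\<close> \<open>len = 2\<close> unfolding arc_at_def by (auto simp: less_2_cases_iff)
  finally have "set G = {Fwd j, Rev j}" using ab by simp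
  then show False using nondeg by blast
qed

lemma Fwd_not_followed_by_Rev: "arc_at t = Fwd j \<Longrightarrow> \<not> is_rev (arc_at (Suc t))"
proof
  assume a: "arc_at t = Fwd j" "is_rev (arc_at (Suc t))"
  then obtain j' where b: "arc_at (Suc t) = Rev j'" by (cases "arc_at (Suc t)") auto
  have "j' = j" using node_Fwd(2)[OF a(1)] node_Rev(1)[OF b] by simp
  then show False using not_Fwd_and_Rev_in_set arc_at_in_set a b by metis
qed

lemma Rev_not_followed_by_Fwd: "arc_at t = Rev j \<Longrightarrow> \<not> is_fwd (arc_at (Suc t))"
proof
  assume a: "arc_at t = Rev j" "is_fwd (arc_at (Suc t))"
  then obtain j' where b: "arc_at (Suc t) = Fwd j'" by (cases "arc_at (Suc t)") auto
  have "cyc n (int j - 1) = cyc n (int j' - 1)" using node_Rev(2)[OF a(1)] node_Fwd(1)[OF b] by simp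
  then have "j = cyc n (int j' - 1 + 1)"
    using eq_cyc_succ_if_cyc_pred_eq[OF n_pos arc_at_index_range(3)[OF a(1)]] by simp
  then have "j' = j" using cyc_of_nat arc_at_index_range(2)[OF b] by simp
  then show False using not_Fwd_and_Rev_in_set arc_at_in_set a b by metis
qed

lemma Fwd_in_set_iff: "Fwd (node (Suc u)) \<in> set G \<longleftrightarrow> is_fwd (arc_at u)"
proof
  assume "Fwd (node (Suc u)) \<in> set G"
  then obtain w where w: "arc_at w = Fwd (node (Suc u))" using in_set_imp_arc_at by blast
  then have "node (Suc w) = node (Suc u)" by (rule node_Fwd(2))
  then have "arc_at u = arc_at w" using node_Suc_inj arc_at_eq by metis
  then show "is_fwd (arc_at u)" using w by simp
next
  assume "is_fwd (arc_at u)"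
  then obtain j where j: "arc_at u = Fwd j" by (cases "arc_at u") auto
  then have "node (Suc u) = j" by (rule node_Fwd(2))
  then show "Fwd (node (Suc u)) \<in> set G" using j arc_at_in_set[of u] by simp
qed

lemma Rev_in_set_iff: "Rev (node t) \<in> set G \<longleftrightarrow> is_rev (arc_at t)"
proof
  assume "Rev (node t) \<in> set G"
  then obtain w where w: "arc_at w = Rev (node t)" using in_set_imp_arc_at by blast
  then have "node w = node t" by (rule node_Rev(1))
  then have "arc_at t = arc_at w" using node_eq_imp_mod_eq arc_at_eq by metis
  then show "is_rev (arc_at t)" using w by simp
next
  assume "is_rev (arc_at t)"
  then obtain j where j: "arc_at t = Rev j" by (cases "arc_at t") auto
  then have "node t = j" by (rule node_Rev(1))
  then show "Rev (node t) \<in> set G" using j arc_at_in_set[of t] by simp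
qed

lemma circuit_nodes_eq: "circuit_nodes n l k G = node ` {..<len}"
proof -
  have "set G = (\<lambda>u. G ! u) ` {..<len}" by (auto simp: set_conv_nth)
  then have "set (map (arc_tail n l k) G) = (\<lambda>u. arc_tail n l k (G ! u)) ` {..<len}" by auto
  also have "\<dots> = node ` {..<len}" unfolding node_def arc_at_def by (intro image_cong) auto
  finally show ?thesis unfolding circuit_nodes_def .
qed

lemma Lcols_subset: "Lcols \<subseteq> {1..n}"
  unfolding essential_bullets_def bullets_def by auto

lemma finite_Lcols: "finite Lcols"
  using Lcols_subset finite_subset by blast

lemma Frows_subset: "Frows \<subseteq> {1..m}"
  unfolding row_arc_rows_def by auto

lemma finite_Frows: "finite Frows"
  using Frows_subset finite_subset by blast

lemma RowArc_in_Frows: "arc_at t = RowArc i \<Longrightarrow> i \<in> Frows"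
  unfolding row_arc_rows_def using arc_at_in_set[of t] arc_at_index_range(1)[of t i] by auto

lemma start_in_range: "i \<in> Frows \<Longrightarrow> l i \<in> {1..n}"
  using Frows_subset row_data by blast

lemma Fwd_in_set_not_in_Lcols: "Fwd c \<in> set G \<Longrightarrow> c \<notin> Lcols"
  and Rev_in_set_not_in_Lcols: "Rev c \<in> set G \<Longrightarrow> c \<notin> Lcols"
  unfolding essential_bullets_def bullets_def circ_set_def otimes_set_def by auto

lemma node_Suc_in_Lcols_iff:
  "node (Suc u) \<in> Lcols \<longleftrightarrow> \<not> is_fwd (arc_at u) \<and> \<not> is_rev (arc_at (Suc u))"
proof -
  have "node (Suc u) \<in> circuit_nodes n l k G"
    unfolding circuit_nodes_eq using node_mod[of "Suc u"] len_pos by (metis imageI lessThan_iff mod_less_divisor)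
  then show ?thesis
    unfolding essential_bullets_def bullets_def circ_set_def otimes_set_def
    using node_in_range[of "Suc u"] Fwd_in_set_iff[of u] Rev_in_set_iff[of "Suc u"] by auto
qed

definition bullet_positions :: "nat set" where
  "bullet_positions = {u. u < len \<and> \<not> is_fwd (arc_at u) \<and> \<not> is_rev (arc_at (Suc u))}"

lemma Lcols_eq_image: "Lcols = (\<lambda>u. node (Suc u)) ` bullet_positions"
proof
  show "Lcols \<subseteq> (\<lambda>u. node (Suc u)) ` bullet_positions"
  proof
    fix x assume x: "x \<in> Lcols"
    then obtain w where w: "w < len" "x = node w"
      unfolding essential_bullets_def circuit_nodes_eq by auto
    define u where "u = (w + len - 1) mod len"
    have "Suc u mod len = (w + len) mod len"
      unfolding u_def using len_pos by (simp add: mod_Suc_eq)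
    then have "node (Suc u) = x" using w node_mod by (metis mod_add_self2)
    moreover have "u < len" unfolding u_def using len_pos by simp
    ultimately show "x \<in> (\<lambda>u. node (Suc u)) ` bullet_positions"
      using x node_Suc_in_Lcols_iff[of u] unfolding bullet_positions_def by auto
  qed
qed (use node_Suc_in_Lcols_iff in \<open>auto simp: bullet_positions_def\<close>)

lemma card_Lcols_eq_card_bullet_positions: "card Lcols = card bullet_positions"
proof -
  have "inj_on (\<lambda>u. node (Suc u)) bullet_positions"
  proof (rule inj_onI)
    fix x y assume "x \<in> bullet_positions" "y \<in> bullet_positions" "node (Suc x) = node (Suc y)"
    then show "x = y" using node_Suc_inj[of x y] unfolding bullet_positions_def by simp
  qed
  then show ?thesis unfolding Lcols_eq_image by (rule card_image)
qed

text \<open>Telescoping: position \<open>u\<close> is followed by a bullet iff it carries a row arc, up to the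
  boundary terms of the maximal runs of reverse arcs, which cancel around the circuit.\<close>
lemma card_bullet_positions: "card bullet_positions = card row_positions"
proof -
  let ?V = "\<lambda>u. of_bool (is_rev (arc_at u)) :: int"
  have pw: "of_bool (\<not> is_fwd (arc_at u) \<and> \<not> is_rev (arc_at (Suc u)))
      = of_bool (is_row (arc_at u)) + ?V u - ?V (Suc u)" for u
    using Fwd_not_followed_by_Rev[of u] by (cases "arc_at u") auto
  have shift: "(\<Sum>u<len. ?V (Suc u)) = (\<Sum>u<len. ?V u)"
    using arc_at_mod[of len] by (intro sum_lessThan_shift_periodic) simp
  have "int (card bullet_positions)
      = (\<Sum>u<len. of_bool (\<not> is_fwd (arc_at u) \<and> \<not> is_rev (arc_at (Suc u))))"
    unfolding bullet_positions_def using int_card_filter_eq_sum[of "{..<len}"] by simp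
  also have "\<dots> = (\<Sum>u<len. of_bool (is_row (arc_at u)))"
    unfolding pw sum.distrib sum_subtractf shift by simp
  also have "\<dots> = int (card row_positions)"
    unfolding row_positions_def using int_card_filter_eq_sum[of "{..<len}"] by simp
  finally show ?thesis by simp
qed

lemma bij_betw_row_positions: "bij_betw (\<lambda>u. arc_index (arc_at u)) row_positions Frows"
proof (rule bij_betw_imageI)
  show "inj_on (\<lambda>u. arc_index (arc_at u)) row_positions"
  proof (rule inj_onI)
    fix a b assume a: "a \<in> row_positions" and b: "b \<in> row_positions"
      and e: "arc_index (arc_at a) = arc_index (arc_at b)"
    obtain i j where "arc_at a = RowArc i" "arc_at b = RowArc j"
      using a b unfolding row_positions_def by (metis is_row.elims(2) mem_Collect_eq)
    then have "node a = node b" using e unfolding node_def by simp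
    then have "a mod len = b mod len" by (rule node_eq_imp_mod_eq)
    then show "a = b" using a b unfolding row_positions_def by simp
  qed
  show "(\<lambda>u. arc_index (arc_at u)) ` row_positions = Frows"
  proof
    show "(\<lambda>u. arc_index (arc_at u)) ` row_positions \<subseteq> Frows"
    proof
      fix x assume "x \<in> (\<lambda>u. arc_index (arc_at u)) ` row_positions"
      then obtain u where "is_row (arc_at u)" "x = arc_index (arc_at u)"
        unfolding row_positions_def by blast
      then have "arc_at u = RowArc x" by (cases "arc_at u") auto
      then show "x \<in> Frows"
        unfolding row_arc_rows_def using arc_at_in_set[of u] arc_at_index_range(1) by fastforce
    qed
    show "Frows \<subseteq> (\<lambda>u. arc_index (arc_at u)) ` row_positions"
    proof
      fix i assume "i \<in> Frows"
      then obtain u where u: "u < len" "arc_at u = RowArc i"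
        unfolding row_arc_rows_def using in_set_imp_arc_at by blast
      then have "u \<in> row_positions" unfolding row_positions_def by simp
      then show "i \<in> (\<lambda>u. arc_index (arc_at u)) ` row_positions"
        by (rule rev_image_eqI) (simp add: u)
    qed
  qed
qed

lemma card_Lcols: "card Lcols = s"
  using card_Lcols_eq_card_bullet_positions card_bullet_positions
    bij_betw_same_card[OF bij_betw_row_positions] by simp

lemma node_after_fwd_run:
  assumes "\<forall>q'<q. is_fwd (arc_at (w + q'))"
  shows "q' \<le> q \<Longrightarrow> node (w + q') = cyc n (int (node w) + int q')"
proof (induction q')
  case 0
  then show ?case using cyc_of_nat node_in_range by simp
next
  case (Suc q')
  then have "is_fwd (arc_at (w + q'))" using assms by simp
  then obtain j where j: "arc_at (w + q') = Fwd j" by (cases "arc_at (w + q')") auto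
  have "cyc n (int j - 1) = cyc n (int (node w) + int q')"
    using node_Fwd(1)[OF j] Suc by simp
  then have "j = cyc n (int (node w) + int q' + 1)"
    using eq_cyc_succ_if_cyc_pred_eq[OF n_pos arc_at_index_range(2)[OF j]] by blast
  then show ?case using node_Fwd(2)[OF j] by (simp add: add_ac)
qed

lemma node_after_rev_run:
  assumes "\<forall>q'<q. is_rev (arc_at (w + q'))"
  shows "q' \<le> q \<Longrightarrow> node (w + q') = cyc n (int (node w) - int q')"
proof (induction q')
  case 0
  then show ?case using cyc_of_nat node_in_range by simp
next
  case (Suc q')
  then have "is_rev (arc_at (w + q'))" using assms by simp
  then obtain j where j: "arc_at (w + q') = Rev j" by (cases "arc_at (w + q')") auto
  have "j = cyc n (int (node w) - int q')" using node_Rev(1)[OF j] Suc by simp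
  then have "cyc n (int j - 1) = cyc n (int (node w) - int q' - 1)"
    using cyc_add_cyc[OF n_pos, of "int (node w) - int q'" "- 1"] by simp
  then show ?case using node_Rev(2)[OF j] by (simp add: algebra_simps)
qed

lemma fwd_run_until_row:
  assumes "is_fwd (arc_at w)" "\<forall>q'<q. \<not> is_row (arc_at (w + q'))"
  shows "q' < q \<Longrightarrow> is_fwd (arc_at (w + q'))"
proof (induction q')
  case 0
  then show ?case using assms(1) by simp
next
  case (Suc q')
  then obtain j where "arc_at (w + q') = Fwd j" by (cases "arc_at (w + q')") auto
  then have "\<not> is_rev (arc_at (w + Suc q'))" using Fwd_not_followed_by_Rev by simp
  then show ?case using assms(2) Suc.prems arc_kinds[of "arc_at (w + Suc q')"] by blast
qed

lemma rev_run_until_row: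
  assumes "is_rev (arc_at w)" "\<forall>q'<q. \<not> is_row (arc_at (w + q'))"
  shows "q' < q \<Longrightarrow> is_rev (arc_at (w + q'))"
proof (induction q')
  case 0
  then show ?case using assms(1) by simp
next
  case (Suc q')
  then obtain j where "arc_at (w + q') = Rev j" by (cases "arc_at (w + q')") auto
  then have "\<not> is_fwd (arc_at (w + Suc q'))" using Rev_not_followed_by_Fwd by simp
  then show ?case using assms(2) Suc.prems arc_kinds[of "arc_at (w + Suc q')"] by blast
qed

lemma no_bullet_inside_fwd_run:
  assumes "\<forall>q'<q. is_fwd (arc_at (w + q'))" "1 \<le> d" "d \<le> q"
  shows "cyc n (int (node w) + int d) \<notin> Lcols"
proof -
  have "d - 1 < q" using assms(2,3) by simp
  then have "is_fwd (arc_at (w + (d - 1)))" using assms(1) by blast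
  then obtain j where j: "arc_at (w + (d - 1)) = Fwd j" by (cases "arc_at (w + (d - 1))") auto
  have "node (w + d) = cyc n (int (node w) + int d)"
    using node_after_fwd_run[OF assms(1) assms(3)] .
  moreover have "node (w + d) = j" using node_Fwd(2)[OF j] assms(2) by simp
  ultimately show ?thesis using Fwd_in_set_not_in_Lcols arc_at_in_set[of "w + (d - 1)"] j by simp
qed

definition last_bullet_before :: "nat \<Rightarrow> nat \<Rightarrow> bool" where
  "last_bullet_before c j \<longleftrightarrow> (\<forall>c'\<in>Lcols. cdist n (l j) c' \<le> cdist n (l j) c)"

lemma last_bullet_before_unique:
  "c1 \<in> Lcols \<Longrightarrow> c2 \<in> Lcols \<Longrightarrow> last_bullet_before c1 j \<Longrightarrow> last_bullet_before c2 j \<Longrightarrow> c1 = c2"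
  unfolding last_bullet_before_def using cdist_inj Lcols_subset
  by (metis (no_types, opaque_lifting) order_antisym subsetD)

lemma fwd_run_from_bullet_shorter:
  assumes c: "node w \<in> Lcols" and F: "\<forall>q'<q. is_fwd (arc_at (w + q'))"
  shows "q < n"
proof (rule ccontr)
  assume "\<not> q < n"
  then have "cyc n (int (node w) + int n) \<notin> Lcols" using no_bullet_inside_fwd_run[OF F, of n] n_pos by simp
  moreover have "cyc n (int (node w) + int n) = node w"
    using cyc_eq_iff[OF n_pos node_in_range, of "int (node w) + int n"] by simp
  ultimately show False using c by simp
qed

lemma cdist_start_after_fwd_run:
  assumes F: "\<forall>q'<q. is_fwd (arc_at (w + q'))" and R: "arc_at (w + q) = RowArc j"
  shows "cdist n (node w) (l j) = (int q + 1) mod int n"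
proof -
  have lj: "l j \<in> {1..n}" using start_in_range[OF RowArc_in_Frows[OF R]] .
  have "cyc n (int (l j) - 1) = cyc n (int (node w) + int q)"
    using node_RowArc(1)[OF R] node_after_fwd_run[OF F order_refl] by simp
  then have "l j = cyc n (int (node w) + int q + 1)"
    by (rule eq_cyc_succ_if_cyc_pred_eq[OF n_pos lj])
  then show ?thesis using cdist_cyc[OF n_pos, of "node w" "int (node w) + int q + 1"] by simp
qed

lemma last_bullet_before_row_after_fwd_run:
  assumes c: "node w \<in> Lcols" and F: "\<forall>q'<q. is_fwd (arc_at (w + q'))"
    and R: "arc_at (w + q) = RowArc j"
  shows "last_bullet_before (node w) j"
  unfolding last_bullet_before_def
proof
  let ?c = "node w"
  fix c' assume c': "c' \<in> Lcols"
  have c'_range: "c' \<in> {1..n}" using c' Lcols_subset by blast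
  have shift: "cdist n (l j) y = (cdist n ?c y - (int q + 1)) mod int n" for y
    using cdist_shift[of n "l j" y ?c] cdist_start_after_fwd_run[OF F R] by (simp add: mod_diff_right_eq)
  have "cdist n (l j) ?c = (int n - (int q + 1)) mod int n" using shift[of ?c] by simp
  also have "\<dots> = int n - (int q + 1)"
    using fwd_run_from_bullet_shorter[OF c F] by (intro mod_pos_pos_trivial) auto
  finally have start: "cdist n (l j) ?c = int n - (int q + 1)" .
  show "cdist n (l j) c' \<le> cdist n (l j) ?c"
  proof (cases "c' = ?c")
    case False
    let ?d = "cdist n ?c c'"
    have d: "0 \<le> ?d" "?d < int n" by (rule cdist_bounds)+
    have "?d \<noteq> 0" using False cdist_eq_0_iff[OF node_in_range c'_range] by simp
    moreover have "cyc n (int ?c + int (nat ?d)) \<in> Lcols"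
      using cyc_add_cdist[OF n_pos c'_range, of ?c] c' d by simp
    then have "\<not> (1 \<le> nat ?d \<and> nat ?d \<le> q)"
      using no_bullet_inside_fwd_run[OF F, of "nat ?d"] by blast
    ultimately have "int q + 1 \<le> ?d" using d by linarith
    then have "cdist n (l j) c' = ?d - (int q + 1)"
      unfolding shift using d by (intro mod_pos_pos_trivial) auto
    then show ?thesis using start d by simp
  qed simp
qed

lemma exists_row_arc_after:
  assumes "Frows \<noteq> {}" shows "\<exists>q. is_row (arc_at (w + q))"
proof -
  obtain u0 where u0: "u0 \<in> row_positions"
    using assms bij_betw_row_positions unfolding bij_betw_def by blast
  have "(w + (len - w mod len + u0)) mod len = u0 mod len"
  proof -
    have "w + (len - w mod len + u0) = (w div len) * len + len + u0"
      using div_mult_mod_eq[of w len] mod_less_divisor[OF len_pos, of w] by linarith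
    also have "\<dots> = u0 + (w div len + 1) * len" by (simp add: algebra_simps)
    finally show ?thesis by (metis mod_mult_self1)
  qed
  then have "arc_at (w + (len - w mod len + u0)) = arc_at u0" by (rule arc_at_eq)
  then have "is_row (arc_at (w + (len - w mod len + u0)))"
    using u0 unfolding row_positions_def by simp
  then show ?thesis by blast
qed

lemma exists_row_after_bullet:
  assumes ne: "Frows \<noteq> {}" and c: "c \<in> Lcols"
  shows "\<exists>j\<in>Frows. last_bullet_before c j"
proof -
  obtain u where u: "\<not> is_fwd (arc_at u)" "\<not> is_rev (arc_at (Suc u))" "c = node (Suc u)"
    using c unfolding Lcols_eq_image bullet_positions_def by auto
  define w where "w = Suc u"
  define q where "q = (LEAST q. is_row (arc_at (w + q)))"
  have "is_row (arc_at (w + q))" unfolding q_def using exists_row_arc_after[OF ne] by (rule LeastI_ex)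
  then obtain j where j: "arc_at (w + q) = RowArc j" by (cases "arc_at (w + q)") auto
  have qmin: "\<forall>q'<q. \<not> is_row (arc_at (w + q'))" unfolding q_def using not_less_Least by blast
  have "\<forall>q'<q. is_fwd (arc_at (w + q'))"
  proof (cases "q = 0")
    case False
    then have "\<not> is_row (arc_at w)" using qmin by (metis add_0_right gr0I)
    then have "is_fwd (arc_at w)" using u(2) arc_kinds unfolding w_def by blast
    then show ?thesis using fwd_run_until_row[OF _ qmin] by blast
  qed simp
  then have "last_bullet_before c j"
    using last_bullet_before_row_after_fwd_run[OF _ _ j] c u(3) unfolding w_def by simp
  then show ?thesis using RowArc_in_Frows[OF j] by blast
qed

text \<open>The row whose arc is the first row arc of the circuit after bullet \<open>c\<close>.\<close>
definition row_after :: "nat \<Rightarrow> nat" where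
  "row_after c = (SOME j. j \<in> Frows \<and> last_bullet_before c j)"

lemma row_after_spec:
  "Frows \<noteq> {} \<Longrightarrow> c \<in> Lcols \<Longrightarrow> row_after c \<in> Frows \<and> last_bullet_before c (row_after c)"
  unfolding row_after_def using exists_row_after_bullet by (metis (mono_tags, lifting) someI_ex)

lemma bij_betw_row_after: "Frows \<noteq> {} \<Longrightarrow> bij_betw row_after Lcols Frows"
proof -
  assume ne: "Frows \<noteq> {}"
  have "inj_on row_after Lcols"
    by (rule inj_onI) (metis last_bullet_before_unique row_after_spec[OF ne])
  moreover have "row_after ` Lcols \<subseteq> Frows" using row_after_spec[OF ne] by auto
  ultimately show ?thesis using card_Lcols finite_Frows bij_betw_if_card_eq by blast
qed

definition rank :: "nat \<Rightarrow> nat" where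
  "rank b = card {c\<in>Lcols. c < b}"

definition rank_from :: "nat \<Rightarrow> nat \<Rightarrow> nat" where
  "rank_from a b = card {c\<in>Lcols. cdist n a c < cdist n a b}"

lemma rank_less: "b \<in> Lcols \<Longrightarrow> rank b < s"
  unfolding rank_def card_Lcols[symmetric] using finite_Lcols
  by (intro psubset_card_mono) auto

lemma rank_from_less: "b \<in> Lcols \<Longrightarrow> rank_from a b < s"
  unfolding rank_from_def card_Lcols[symmetric] using finite_Lcols
  by (intro psubset_card_mono) auto

lemma rank_strict_mono: "b \<in> Lcols \<Longrightarrow> b' \<in> Lcols \<Longrightarrow> b < b' \<Longrightarrow> rank b < rank b'"
  unfolding rank_def using finite_Lcols by (intro psubset_card_mono) auto

lemma bij_betw_rank: "bij_betw rank Lcols {..<s}"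
proof (rule bij_betw_if_card_eq)
  show "inj_on rank Lcols"
    by (rule inj_onI) (metis less_irrefl linorder_neqE_nat rank_strict_mono)
qed (use rank_less card_Lcols in auto)

lemma rank_from_eq_mod:
  assumes a: "a \<in> {1..n}" and b: "b \<in> Lcols"
  shows "int (rank_from a b) = (int (rank b) - int (rank a)) mod int s"
proof -
  have bn: "b \<in> {1..n}" using b Lcols_subset by auto
  have "\<exists>e. int (rank_from a b) = int (rank b) - int (rank a) + e * int s"
  proof (cases "a \<le> b")
    case True
    have "{c\<in>Lcols. cdist n a c < cdist n a b} = {c\<in>Lcols. a \<le> c \<and> c < b}"
      using cdist_eq[OF a] bn True Lcols_subset by (auto split: if_splits)
    moreover have U: "{c\<in>Lcols. c < b} = {c\<in>Lcols. c < a} \<union> {c\<in>Lcols. a \<le> c \<and> c < b}"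
      using True by auto
    have "card {c\<in>Lcols. c < b} = card {c\<in>Lcols. c < a} + card {c\<in>Lcols. a \<le> c \<and> c < b}"
      unfolding U by (rule card_Un_disjoint) (auto simp: finite_Lcols)
    ultimately have "int (rank_from a b) = int (rank b) - int (rank a) + 0 * int s"
      unfolding rank_from_def rank_def by simp
    then show ?thesis by blast
  next
    case False
    have "{c\<in>Lcols. cdist n a c < cdist n a b} = {c\<in>Lcols. a \<le> c} \<union> {c\<in>Lcols. c < b}"
      using cdist_eq[OF a] bn False Lcols_subset by (auto split: if_splits)
    moreover have "card ({c\<in>Lcols. a \<le> c} \<union> {c\<in>Lcols. c < b})
        = card {c\<in>Lcols. a \<le> c} + card {c\<in>Lcols. c < b}"
      using False by (intro card_Un_disjoint) (auto simp: finite_Lcols)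
    moreover have U: "Lcols = {c\<in>Lcols. c < a} \<union> {c\<in>Lcols. a \<le> c}" by auto
    have "card Lcols = card {c\<in>Lcols. c < a} + card {c\<in>Lcols. a \<le> c}"
      by (subst U, rule card_Un_disjoint) (auto simp: finite_Lcols)
    then have "s = card {c\<in>Lcols. c < a} + card {c\<in>Lcols. a \<le> c}" using card_Lcols by simp
    ultimately have "int (rank_from a b) = int (rank b) - int (rank a) + 1 * int s"
      unfolding rank_from_def rank_def by simp
    then show ?thesis by blast
  qed
  then obtain e where e: "int (rank_from a b) = int (rank b) - int (rank a) + e * int s" by blast
  have "(int (rank b) - int (rank a)) mod int s = int (rank_from a b) mod int s" unfolding e by simp
  also have "\<dots> = int (rank_from a b)" using rank_from_less[OF b] by (intro mod_pos_pos_trivial) auto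
  finally show ?thesis by simp
qed

lemma rank_start_eq_mod:
  assumes c: "c \<in> Lcols" and j: "j \<in> Frows" and last: "last_bullet_before c j"
  shows "int (rank (l j)) mod int s = (int (rank c) + 1) mod int s"
proof -
  have "{c'\<in>Lcols. cdist n (l j) c' < cdist n (l j) c} = Lcols - {c}"
  proof
    show "Lcols - {c} \<subseteq> {c'\<in>Lcols. cdist n (l j) c' < cdist n (l j) c}"
    proof
      fix c' assume c': "c' \<in> Lcols - {c}"
      then have "cdist n (l j) c' \<noteq> cdist n (l j) c"
        using cdist_inj c Lcols_subset by blast
      moreover have "cdist n (l j) c' \<le> cdist n (l j) c"
        using last c' unfolding last_bullet_before_def by blast
      ultimately show "c' \<in> {c'\<in>Lcols. cdist n (l j) c' < cdist n (l j) c}" using c' by simp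
    qed
  qed auto
  then have "rank_from (l j) c = s - 1"
    unfolding rank_from_def card_Lcols[symmetric] using c finite_Lcols by simp
  moreover have "s \<ge> 1" using j finite_Frows card_gt_0_iff[of Frows] by fastforce
  ultimately have "(int (rank c) - int (rank (l j))) mod int s = int s - 1"
    using rank_from_eq_mod[OF start_in_range[OF j] c] by simp
  then have "(int (rank c) - int (rank (l j)) + int (rank (l j)) + 1) mod int s
      = (int s - 1 + int (rank (l j)) + 1) mod int s"
    by (metis mod_add_left_eq)
  then show ?thesis by simp
qed

definition last_covered_bullet :: "nat \<Rightarrow> nat \<Rightarrow> bool" where
  "last_covered_bullet i b \<longleftrightarrow>
     b \<in> Lcols \<and> A i b \<and> (\<forall>c\<in>Lcols. A i c \<longrightarrow> cdist n (l i) c \<le> cdist n (l i) b)"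

lemma last_covered_bullet_if_no_rev:
  assumes Ri: "arc_at t = RowArc i" and noV: "\<not> is_rev (arc_at (Suc t))"
    and between: "\<forall>q'<q. \<not> is_row (arc_at (Suc t + q'))" and Rj: "arc_at (Suc t + q) = RowArc j"
  shows "last_covered_bullet i (node (Suc t)) \<and> last_bullet_before (node (Suc t)) j"
proof
  have i: "i \<in> {1..m}" using arc_at_index_range(1)[OF Ri] .
  have B: "node (Suc t) \<in> Lcols" using node_Suc_in_Lcols_iff[of t] Ri noV by simp
  have "(int (k i) - 1) mod int n = int (k i) - 1"
    using row_data[OF i] n_pos by (intro mod_pos_pos_trivial) auto
  then have "cdist n (l i) (node (Suc t)) = int (k i) - 1"
    using node_RowArc(2)[OF Ri] cdist_cyc[OF n_pos] by simp
  then show "last_covered_bullet i (node (Suc t))"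
    unfolding last_covered_bullet_def using A_iff_cdist[OF i] B Lcols_subset by fastforce
  have "\<forall>q'<q. is_fwd (arc_at (Suc t + q'))"
  proof (cases "q = 0")
    case False
    then have "\<not> is_row (arc_at (Suc t))" using between by (metis add_0_right gr0I)
    then have "is_fwd (arc_at (Suc t))" using noV arc_kinds by blast
    then show ?thesis using fwd_run_until_row[OF _ between] by blast
  qed simp
  then show "last_bullet_before (node (Suc t)) j"
    using last_bullet_before_row_after_fwd_run[OF B _ Rj] by blast
qed

lemma node_rev_run_after_row:
  assumes Ri: "arc_at t = RowArc i" and run: "\<forall>q'<q. is_rev (arc_at (Suc t + q'))" and "q' \<le> q"
  shows "node (Suc t + q') = cyc n (int (l i) + int (k i) - 1 - int q')"
  using node_after_rev_run[OF run assms(3)] node_RowArc(2)[OF Ri]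
    cyc_add_cyc[OF n_pos, of "int (l i) + int (k i) - 1" "- int q'"] by simp

text \<open>A reverse run of length \<open>k i\<close> after row arc \<open>a\<^sub>i\<close> would end at the tail of
  \<open>a\<^sub>i\<close>, which the circuit visits only once.\<close>
lemma rev_run_after_row_shorter:
  assumes Ri: "arc_at t = RowArc i" and run: "\<forall>q'<q. is_rev (arc_at (Suc t + q'))"
    and short: "Suc t + q < len"
  shows "q < k i"
proof (rule ccontr)
  assume "\<not> q < k i"
  then have "node (Suc t + k i) = node t"
    using node_rev_run_after_row[OF Ri run, of "k i"] node_RowArc(1)[OF Ri] by simp
  then have "(Suc t + k i) mod len = t mod len" by (rule node_eq_imp_mod_eq)
  moreover have "Suc t + k i < len" using \<open>\<not> q < k i\<close> short by simp
  ultimately show False using short by simp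
qed

lemma last_covered_bullet_if_rev_run:
  assumes Ri: "arc_at t = RowArc i" and V: "is_rev (arc_at (Suc t))"
    and between: "\<forall>q'<q. \<not> is_row (arc_at (Suc t + q'))" and Rj: "arc_at (Suc t + q) = RowArc j"
    and short: "Suc t + q < len"
  shows "last_covered_bullet i (node (Suc t + q)) \<and> last_bullet_before (node (Suc t + q)) j"
proof
  let ?w = "Suc t" and ?B = "node (Suc t + q)"
  have i: "i \<in> {1..m}" using arc_at_index_range(1)[OF Ri] .
  have q1: "q \<ge> 1" using V Rj by (cases q) auto
  have run: "\<forall>q'<q. is_rev (arc_at (?w + q'))" using rev_run_until_row[OF V between] by blast
  have qk: "q < k i" by (rule rev_run_after_row_shorter[OF Ri run short])
  have "q - 1 < q" using q1 by simp
  then have "\<not> is_fwd (arc_at (?w + (q - 1)))" using run by (cases "arc_at (?w + (q - 1))") auto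
  moreover have "Suc (?w + (q - 1)) = ?w + q" using q1 by simp
  ultimately have B: "?B \<in> Lcols" using node_Suc_in_Lcols_iff[of "?w + (q - 1)"] Rj by simp
  show "last_bullet_before ?B j"
    using last_bullet_before_row_after_fwd_run[OF B, of 0 j] Rj by simp
  have dist_B: "cdist n (l i) ?B = int (k i) - 1 - int q"
  proof -
    have "k i \<le> n - 1" using row_data[OF i] by blast
    then show ?thesis using node_rev_run_after_row[OF Ri run order_refl] cdist_cyc[OF n_pos] qk by simp
  qed
  have "cdist n (l i) c \<le> cdist n (l i) ?B" if c: "c \<in> Lcols" "A i c" for c
  proof (rule ccontr)
    assume far: "\<not> cdist n (l i) c \<le> cdist n (l i) ?B"
    have c_range: "c \<in> {1..n}" using c Lcols_subset by auto
    have dc: "0 \<le> cdist n (l i) c" "cdist n (l i) c < int (k i)"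
      using c A_iff_cdist[OF i c_range] cdist_bounds by auto
    define q' where "q' = nat (int (k i) - 1 - cdist n (l i) c)"
    have q'q: "q' < q" using far dist_B dc unfolding q'_def by linarith
    have "c = node (?w + q')"
      using node_rev_run_after_row[OF Ri run, of q'] q'q dc cyc_add_cdist[OF n_pos c_range, of "l i"]
      unfolding q'_def by (simp add: algebra_simps)
    then have "Rev c \<in> set G" using Rev_in_set_iff run q'q by simp
    then show False using Rev_in_set_not_in_Lcols c by simp
  qed
  then show "last_covered_bullet i ?B"
    unfolding last_covered_bullet_def using B A_iff_cdist[OF i] Lcols_subset dist_B qk by auto
qed

lemma last_covered_bullet_before_next_row:
  assumes "t < t'" "t' < len" "arc_at t = RowArc i" "arc_at t' = RowArc j"
    and "\<forall>v. t < v \<and> v < t' \<longrightarrow> \<not> is_row (arc_at v)"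
  shows "\<exists>b. last_covered_bullet i b \<and> last_bullet_before b j"
proof -
  define q where "q = t' - Suc t"
  have t': "t' = Suc t + q" unfolding q_def using assms(1) by simp
  have between: "\<forall>q'<q. \<not> is_row (arc_at (Suc t + q'))" using assms(5) unfolding q_def by auto
  show ?thesis
  proof (cases "is_rev (arc_at (Suc t))")
    case True
    then show ?thesis using last_covered_bullet_if_rev_run assms(2-4) t' between by blast
  next
    case False
    then show ?thesis using last_covered_bullet_if_no_rev assms(3,4) t' between by blast
  qed
qed

lemma start_between_if_last_bullet_before:
  assumes last: "last_bullet_before c j" and b: "b \<in> Lcols"
    and cb: "cdist n a c < cdist n a b"
  shows "cdist n a c < cdist n a (l j) \<and> cdist n a (l j) \<le> cdist n a b"
proof (rule ccontr)
  let ?d = "cdist n a (l j)"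
  have shift: "cdist n (l j) y = (cdist n a y - ?d) mod int n" for y by (rule cdist_shift)
  have bounds: "0 \<le> cdist n a c" "cdist n a b < int n" "0 \<le> ?d" "?d < int n"
    using cdist_bounds by auto
  have "cdist n (l j) b \<le> cdist n (l j) c" using last b unfolding last_bullet_before_def by blast
  moreover assume "\<not> (cdist n a c < ?d \<and> ?d \<le> cdist n a b)"
  then consider "?d \<le> cdist n a c" | "cdist n a b < ?d" by linarith
  then have "cdist n (l j) c < cdist n (l j) b"
  proof cases
    case 1
    then have "cdist n (l j) b = cdist n a b - ?d" "cdist n (l j) c = cdist n a c - ?d"
      unfolding shift using bounds cb by (auto intro!: mod_pos_pos_trivial)
    then show ?thesis using cb by simp
  next
    case 2
    have wrap: "(x - ?d) mod int n = x - ?d + int n" if "0 \<le> x" "x < ?d" for x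
    proof -
      have "(x - ?d + int n) mod int n = x - ?d + int n"
        using that bounds by (intro mod_pos_pos_trivial) auto
      then show ?thesis by simp
    qed
    have "cdist n (l j) b = cdist n a b - ?d + int n" "cdist n (l j) c = cdist n a c - ?d + int n"
      unfolding shift using wrap bounds cb 2 by simp_all
    then show ?thesis using cb by simp
  qed
  ultimately show False by simp
qed

text \<open>Row \<open>j\<close> starts inside the interval of row \<open>i\<close> before a column \<open>b\<close> that it misses, so it
  ends inside that interval as well.\<close>
lemma dominates_if_start_before_missed_column:
  assumes i: "i \<in> {1..m}" and j: "j \<in> {1..m}" and b: "b \<in> {1..n}"
    and Aib: "A i b" and nAjb: "\<not> A j b" and start: "cdist n (l i) (l j) \<le> cdist n (l i) b"
  shows "dominates n A i j"
  unfolding dominates_def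
proof (intro ballI impI)
  let ?d = "cdist n (l i) (l j)"
  fix x assume x: "x \<in> {1..n}" "A j x"
  have "(cdist n (l i) b - ?d) mod int n = cdist n (l i) b - ?d"
    using start cdist_bounds[of "l i" b] cdist_bounds[of "l i" "l j"] by (intro mod_pos_pos_trivial) auto
  then have "cdist n (l j) b = cdist n (l i) b - ?d" using cdist_shift[of n "l j" b "l i"] by simp
  then have kj: "int (k j) \<le> cdist n (l i) b - ?d" using nAjb A_iff_cdist[OF j b] by simp
  have "cdist n (l j) x < int (k j)" using x A_iff_cdist[OF j] by simp
  then have "(?d + cdist n (l j) x) mod int n = ?d + cdist n (l j) x"
    using kj cdist_bounds[of "l i" b] cdist_bounds[of "l i" "l j"] cdist_bounds[of "l j" x]
    by (intro mod_pos_pos_trivial) auto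
  then have "cdist n (l i) x = ?d + cdist n (l j) x" using cdist_add[of n "l i" x "l j"] by simp
  then have "cdist n (l i) x < int (k i)"
    using kj Aib A_iff_cdist[OF i b] \<open>cdist n (l j) x < int (k j)\<close> by linarith
  then show "A i x" using A_iff_cdist[OF i x(1)] by simp
qed

lemma exists_last_covered_bullet:
  assumes "\<exists>c\<in>Lcols. A i c" shows "\<exists>b. last_covered_bullet i b"
proof -
  let ?C = "{c\<in>Lcols. A i c}"
  have "finite (cdist n (l i) ` ?C)" "cdist n (l i) ` ?C \<noteq> {}" using finite_Lcols assms by auto
  then obtain b where b: "b \<in> ?C" "cdist n (l i) b = Max (cdist n (l i) ` ?C)"
    by (metis (no_types, lifting) Max_in imageE)
  then have "last_covered_bullet i b"
    unfolding last_covered_bullet_def using finite_Lcols by simp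
  then show ?thesis ..
qed

lemma exists_previous_row_position:
  assumes u: "u \<in> row_positions" and "u \<noteq> Min row_positions"
  shows "\<exists>v\<in>row_positions. v < u \<and> (\<forall>x. v < x \<and> x < u \<longrightarrow> \<not> is_row (arc_at x))"
proof -
  have fin: "finite row_positions" unfolding row_positions_def by simp
  let ?V = "{v\<in>row_positions. v < u}"
  have "Min row_positions \<in> ?V"
    using assms fin Min_in[OF fin] Min_le[OF fin u] by (metis (mono_tags) empty_iff le_neq_implies_less mem_Collect_eq)
  then have "?V \<noteq> {}" by blast
  then have v: "Max ?V \<in> ?V" using fin by (intro Max_in) auto
  have "\<not> is_row (arc_at x)" if "Max ?V < x" "x < u" for x
  proof
    assume "is_row (arc_at x)"
    then have "x \<in> ?V" using that u unfolding row_positions_def by simp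
    then show False using that(1) fin by (simp add: leD)
  qed
  then show ?thesis using v by blast
qed

end

section \<open>Winding number and covering\<close>

locale wound_circuit = circuit_of_circular_matrix +
  fixes p :: int
  assumes wind: "winding_number n k G p"
begin

text \<open>Signed number of times arc \<open>e\<close> passes over column \<open>c\<close>.\<close>
definition crossing :: "arc \<Rightarrow> nat \<Rightarrow> int" where
  "crossing e c = (case e of RowArc i \<Rightarrow> of_bool (A i c)
     | Fwd j \<Rightarrow> of_bool (j = c) | Rev j \<Rightarrow> - of_bool (j = c))"

lemma cdist_node_step:
  assumes c: "c \<in> {1..n}"
  shows "cdist n c (node (Suc u)) - cdist n c (node u)
         = arc_length k (arc_at u) - int n * crossing (arc_at u) c"
proof (cases "arc_at u")
  case (RowArc i)
  have i: "i \<in> {1..m}" using arc_at_index_range(1)[OF RowArc] .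
  have "0 \<le> int (k i)" "int (k i) \<le> int n" using row_data[OF i] by auto
  then show ?thesis
    using cdist_cyc_step[OF n_pos, of "int (k i)" c "l i"] A_iff_cdist[OF i c]
    unfolding node_RowArc[OF RowArc] crossing_def RowArc by (simp add: algebra_simps)
next
  case (Fwd j)
  have j: "j \<in> {1..n}" using arc_at_index_range(2)[OF Fwd] .
  have "cdist n j c < 1 \<longleftrightarrow> j = c" using cdist_eq_0_iff[OF j c] cdist_bounds[of j c] by linarith
  then show ?thesis
    using cdist_cyc_step[OF n_pos, of 1 c j] n_pos cyc_of_nat[OF j]
    unfolding node_Fwd[OF Fwd] crossing_def Fwd by simp
next
  case (Rev j)
  have j: "j \<in> {1..n}" using arc_at_index_range(3)[OF Rev] .
  have "cdist n j c < 1 \<longleftrightarrow> j = c" using cdist_eq_0_iff[OF j c] cdist_bounds[of j c] by linarith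
  then show ?thesis
    using cdist_cyc_step[OF n_pos, of 1 c j] n_pos cyc_of_nat[OF j]
    unfolding node_Rev[OF Rev] crossing_def Rev by simp
qed

text \<open>The cyclic distance from \<open>c\<close> returns to its initial value around the circuit, while
  the arc lengths add up to \<open>p n\<close>.\<close>
lemma sum_crossing_eq_winding:
  assumes c: "c \<in> {1..n}"
  shows "(\<Sum>u<len. crossing (arc_at u) c) = p"
proof -
  let ?f = "\<lambda>u. cdist n c (node u)"
  have "(\<Sum>u<len. ?f (Suc u)) = (\<Sum>u<len. ?f u)"
    using node_mod[of len] by (intro sum_lessThan_shift_periodic) simp
  then have "0 = (\<Sum>u<len. ?f (Suc u) - ?f u)" by (simp add: sum_subtractf)
  also have "\<dots> = (\<Sum>u<len. arc_length k (arc_at u)) - int n * (\<Sum>u<len. crossing (arc_at u) c)"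
    using cdist_node_step[OF c] by (simp add: sum_subtractf sum_distrib_left)
  also have "(\<Sum>u<len. arc_length k (arc_at u)) = p * int n"
    using wind len_pos unfolding winding_number_def sum_list_sum_nth arc_at_def
    by (simp add: atLeast0LessThan)
  finally show ?thesis using n_pos by (simp add: algebra_simps)
qed

lemma card_rows_covering_bullet:
  assumes c: "c \<in> Lcols" shows "int (card {i\<in>Frows. A i c}) = p"
proof -
  have crossing: "crossing (arc_at u) c = of_bool (u \<in> row_positions \<and> A (arc_index (arc_at u)) c)"
    if "u < len" for u
  proof (cases "arc_at u")
    case (Fwd j)
    then have "j \<noteq> c" using Fwd_in_set_not_in_Lcols arc_at_in_set[of u] c by fastforce
    then show ?thesis using Fwd by (simp add: crossing_def row_positions_def)
  next
    case (Rev j)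
    then have "j \<noteq> c" using Rev_in_set_not_in_Lcols arc_at_in_set[of u] c by fastforce
    then show ?thesis using Rev by (simp add: crossing_def row_positions_def)
  qed (use that in \<open>simp add: crossing_def row_positions_def\<close>)
  have "p = (\<Sum>u<len. crossing (arc_at u) c)"
    using sum_crossing_eq_winding c Lcols_subset by auto
  also have "\<dots> = (\<Sum>u<len. of_bool (u \<in> row_positions \<and> A (arc_index (arc_at u)) c))"
    by (rule sum.cong) (simp_all add: crossing)
  also have "\<dots> = int (card {u\<in>{..<len}. u \<in> row_positions \<and> A (arc_index (arc_at u)) c})"
    by (rule int_card_filter_eq_sum[symmetric]) simp
  also have "{u\<in>{..<len}. u \<in> row_positions \<and> A (arc_index (arc_at u)) c}
      = {u\<in>row_positions. A (arc_index (arc_at u)) c}"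
    unfolding row_positions_def by auto
  also have "card {u\<in>row_positions. A (arc_index (arc_at u)) c} = card {i\<in>Frows. A i c}"
  proof -
    let ?f = "\<lambda>u. arc_index (arc_at u)"
    have "inj_on ?f row_positions" "?f ` row_positions = Frows"
      using bij_betw_row_positions unfolding bij_betw_def by auto
    then have "inj_on ?f {u\<in>row_positions. A (?f u) c}" "?f ` {u\<in>row_positions. A (?f u) c} = {i\<in>Frows. A i c}"
      by (auto intro: inj_on_subset)
    then show ?thesis using card_image by fastforce
  qed
  finally show ?thesis by simp
qed

lemma winding_nonneg:
  assumes "Frows \<noteq> {}" shows "p \<ge> 0"
proof -
  have "card Lcols \<noteq> 0" using assms card_Lcols finite_Frows by simp
  then obtain c where "c \<in> Lcols" by (metis card.empty ex_in_conv)
  then show ?thesis using card_rows_covering_bullet[of c] by linarith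
qed

text \<open>Without row arcs the circuit cannot turn around, so it passes over the column of its
  first arc exactly once.\<close>
lemma winding_eq_if_no_rows:
  assumes no_rows: "Frows = {}" shows "p = crossing (arc_at 0) (arc_index (arc_at 0))"
proof -
  let ?c = "arc_index (arc_at 0)"
  have not_row: "\<not> is_row (arc_at u)" for u
    using RowArc_in_Frows no_rows by (cases "arc_at u") auto
  have c: "?c \<in> {1..n}" using not_row[of 0] arc_at_index_range[of 0] by (cases "arc_at 0") auto
  have zero: "crossing (arc_at u) ?c = 0" if u: "u \<in> {..<len} - {0}" for u
  proof -
    have "arc_at u \<noteq> arc_at 0" using node_eq_imp_mod_eq[of u 0] u unfolding node_def by auto
    moreover have "arc_at u \<noteq> Fwd j \<or> arc_at 0 \<noteq> Rev j" "arc_at u \<noteq> Rev j \<or> arc_at 0 \<noteq> Fwd j" for j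
      using not_Fwd_and_Rev_in_set arc_at_in_set by metis+
    ultimately show ?thesis using not_row[of u] not_row[of 0]
      by (cases "arc_at u"; cases "arc_at 0") (auto simp: crossing_def)
  qed
  have "(\<Sum>u\<in>{..<len} - {0}. crossing (arc_at u) ?c) = 0" using zero by (intro sum.neutral) blast
  then have "(\<Sum>u<len. crossing (arc_at u) ?c) = crossing (arc_at 0) ?c"
    using len_pos sum.remove[of "{..<len}" 0 "\<lambda>u. crossing (arc_at u) ?c"] by simp
  then show ?thesis using sum_crossing_eq_winding[OF c] by simp
qed

lemma winding_unit_if_no_rows: "Frows = {} \<Longrightarrow> p = 1 \<or> p = -1"
  using winding_eq_if_no_rows by (cases "arc_at 0") (auto simp: crossing_def dest: RowArc_in_Frows)

end

section \<open>The circulant structure\<close>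

locale circuit_without_dominating_rows = wound_circuit +
  assumes nodom: "no_dominating_rows m n A"
begin

lemma row_after_covers_last_covered_bullet:
  assumes i: "i \<in> Frows" and b: "last_covered_bullet i b"
    and c: "c \<in> Lcols" "A i c" "c \<noteq> b"
  shows "row_after c \<noteq> i \<and> A (row_after c) b"
proof -
  let ?j = "row_after c"
  have ne: "Frows \<noteq> {}" using i by auto
  have i1: "i \<in> {1..m}" and j1: "?j \<in> {1..m}" using i row_after_spec[OF ne c(1)] Frows_subset by auto
  have bL: "b \<in> Lcols" and Aib: "A i b" using b unfolding last_covered_bullet_def by auto
  have bn: "b \<in> {1..n}" and cn: "c \<in> {1..n}" using bL c Lcols_subset by auto
  have "cdist n (l i) c \<le> cdist n (l i) b" using b c unfolding last_covered_bullet_def by blast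
  moreover have "cdist n (l i) c \<noteq> cdist n (l i) b" using cdist_inj[OF cn bn] c(3) by blast
  ultimately have cb: "cdist n (l i) c < cdist n (l i) b" by simp
  have between: "cdist n (l i) c < cdist n (l i) (l ?j)" "cdist n (l i) (l ?j) \<le> cdist n (l i) b"
    using start_between_if_last_bullet_before[OF _ bL cb] row_after_spec[OF ne c(1)] by auto
  have "?j \<noteq> i" using between(1) cdist_bounds[of "l i" c] by auto
  moreover have "A ?j b"
  proof (rule ccontr)
    assume "\<not> A ?j b"
    then have "dominates n A i ?j"
      using dominates_if_start_before_missed_column[OF i1 j1 bn Aib _ between(2)] by blast
    moreover have "\<not> dominates n A i ?j"
      using nodom i1 j1 \<open>?j \<noteq> i\<close> unfolding no_dominating_rows_def by (simp only: Ball_def) simp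
    ultimately show False by contradiction
  qed
  ultimately show ?thesis by blast
qed

text \<open>Each further bullet covered by row \<open>i\<close> is the last bullet before a different row that also
  covers the last bullet covered by \<open>i\<close>; there are only \<open>p - 1\<close> such rows.\<close>
lemma card_covered_bullets_le:
  assumes i: "i \<in> Frows" shows "int (card {c\<in>Lcols. A i c}) \<le> p"
proof (cases "\<exists>c\<in>Lcols. A i c")
  case True
  let ?C = "{c\<in>Lcols. A i c}"
  have ne: "Frows \<noteq> {}" using i by auto
  obtain b where b: "last_covered_bullet i b" using exists_last_covered_bullet[OF True] ..
  then have bC: "b \<in> ?C" unfolding last_covered_bullet_def by simp
  have "inj_on row_after Lcols" using bij_betw_row_after[OF ne] by (simp add: bij_betw_def)
  then have "inj_on row_after (?C - {b})" by (rule inj_on_subset) auto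
  moreover have "row_after ` (?C - {b}) \<subseteq> {j\<in>Frows. A j b} - {i}"
    using row_after_covers_last_covered_bullet[OF i b] row_after_spec[OF ne] by auto
  ultimately have "card (?C - {b}) \<le> card ({j\<in>Frows. A j b} - {i})"
    using finite_Frows by (intro card_inj_on_le) auto
  moreover have "card (?C - {b}) = card ?C - 1" using bC finite_Lcols by simp
  moreover have "card ({j\<in>Frows. A j b} - {i}) = card {j\<in>Frows. A j b} - 1"
    using i bC finite_Frows by simp
  moreover have "int (card {j\<in>Frows. A j b}) = p" using card_rows_covering_bullet bC by simp
  moreover have "card ?C \<ge> 1" using bC finite_Lcols card_gt_0_iff[of ?C] by fastforce
  moreover have "card {j\<in>Frows. A j b} \<ge> 1"
    using i bC finite_Frows card_gt_0_iff[of "{j\<in>Frows. A j b}"] by fastforce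
  ultimately show ?thesis by linarith
next
  case False
  then have "{c\<in>Lcols. A i c} = {}" by blast
  then have "card {c\<in>Lcols. A i c} = 0" by (simp only: card.empty)
  moreover have "p \<ge> 0" using winding_nonneg i by blast
  ultimately show ?thesis by simp
qed

lemma card_covered_bullets:
  assumes i: "i \<in> Frows" shows "int (card {c\<in>Lcols. A i c}) = p"
proof -
  have "(\<Sum>i\<in>Frows. int (card {c\<in>Lcols. A i c})) = (\<Sum>i\<in>Frows. \<Sum>c\<in>Lcols. of_bool (A i c))"
    by (rule sum.cong[OF refl int_card_filter_eq_sum[OF finite_Lcols]])
  also have "\<dots> = (\<Sum>c\<in>Lcols. \<Sum>i\<in>Frows. of_bool (A i c))" by (rule sum.swap)
  also have "\<dots> = (\<Sum>c\<in>Lcols. int (card {i\<in>Frows. A i c}))"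
    by (rule sum.cong[OF refl int_card_filter_eq_sum[OF finite_Frows, symmetric]])
  also have "\<dots> = (\<Sum>c\<in>Lcols. p)" using card_rows_covering_bullet by simp
  also have "\<dots> = (\<Sum>i\<in>Frows. p)" using card_Lcols by simp
  finally have sum0: "(\<Sum>i\<in>Frows. p - int (card {c\<in>Lcols. A i c})) = 0"
    by (simp add: sum_subtractf)
  have "0 \<le> p - int (card {c\<in>Lcols. A i c})" if "i \<in> Frows" for i
    using card_covered_bullets_le[OF that] by simp
  from sum_nonneg_eq_0_iff[OF finite_Frows this] sum0 i show ?thesis by simp
qed

lemma covers_iff_rank_from_less:
  assumes i: "i \<in> Frows" and b: "b \<in> Lcols"
  shows "A i b \<longleftrightarrow> int (rank_from (l i) b) < p"
proof -
  have i1: "i \<in> {1..m}" using i Frows_subset by auto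
  have C: "{c\<in>Lcols. A i c} = {c\<in>Lcols. cdist n (l i) c < int (k i)}"
    using A_iff_cdist[OF i1] Lcols_subset by auto
  have bn: "b \<in> {1..n}" using b Lcols_subset by auto
  show ?thesis
  proof
    assume "A i b"
    then have "{c\<in>Lcols. cdist n (l i) c < cdist n (l i) b} \<subset> {c\<in>Lcols. A i c}"
      using A_iff_cdist[OF i1 bn] b unfolding C by auto
    then have "rank_from (l i) b < card {c\<in>Lcols. A i c}"
      unfolding rank_from_def using finite_Lcols by (intro psubset_card_mono) auto
    then show "int (rank_from (l i) b) < p" using card_covered_bullets[OF i] by simp
  next
    assume less: "int (rank_from (l i) b) < p"
    show "A i b"
    proof (rule ccontr)
      assume "\<not> A i b"
      then have "{c\<in>Lcols. A i c} \<subseteq> {c\<in>Lcols. cdist n (l i) c < cdist n (l i) b}"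
        using A_iff_cdist[OF i1 bn] unfolding C by auto
      then have "card {c\<in>Lcols. A i c} \<le> rank_from (l i) b"
        unfolding rank_from_def using finite_Lcols by (intro card_mono) auto
      then show False using less card_covered_bullets[OF i] by simp
    qed
  qed
qed

lemma row_after_covers_iff:
  assumes ne: "Frows \<noteq> {}" and c: "c \<in> Lcols" and b: "b \<in> Lcols"
  shows "A (row_after c) b \<longleftrightarrow> (int (rank b) - int (rank c) - 1) mod int s < p"
proof -
  let ?j = "row_after c"
  have j: "?j \<in> Frows" "last_bullet_before c ?j" using row_after_spec[OF ne c] by auto
  have "A ?j b \<longleftrightarrow> int (rank_from (l ?j) b) < p" by (rule covers_iff_rank_from_less[OF j(1) b])
  also have "int (rank_from (l ?j) b) = (int (rank b) - int (rank (l ?j)) mod int s) mod int s"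
    using rank_from_eq_mod[OF start_in_range[OF j(1)] b] by (simp add: mod_diff_right_eq)
  also have "\<dots> = (int (rank b) - (int (rank c) + 1) mod int s) mod int s"
    using rank_start_eq_mod[OF c j] by simp
  also have "\<dots> = (int (rank b) - int (rank c) - 1) mod int s"
    by (simp add: mod_diff_right_eq algebra_simps)
  finally show ?thesis .
qed

text \<open>Rows are listed by the rank of the bullet preceding them and columns by rank, both shifted
  so that the indexing matches the convention of \<^const>\<open>circulant\<close>.\<close>
lemma submatrix_circulant:
  assumes ne: "Frows \<noteq> {}"
  shows "\<exists>\<sigma> \<tau>. bij_betw \<sigma> {1..s} Frows \<and> bij_betw \<tau> {1..s} Lcols \<and>
            (\<forall>a\<in>{1..s}. \<forall>b\<in>{1..s}. A (\<sigma> a) (\<tau> b) \<longleftrightarrow> circulant s p a b)"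
proof -
  have s: "0 < s" using ne finite_Frows by (simp add: card_gt_0_iff)
  define bullet where "bullet = inv_into Lcols rank"
  have bullet: "bullet x \<in> Lcols" "rank (bullet x) = x" if "x < s" for x
    using bij_betw_rank that unfolding bullet_def
    by (auto simp: bij_betw_def intro: inv_into_into f_inv_into_f)
  have bij_bullet: "bij_betw bullet {..<s} Lcols"
    unfolding bullet_def using bij_betw_rank by (rule bij_betw_inv_into)
  define row_idx where "row_idx a = nat ((int a - 2) mod int s)" for a :: nat
  define col_idx where "col_idx b = nat ((int b - 1) mod int s)" for b :: nat
  have bij_row_idx: "bij_betw row_idx {1..s} {..<s}"
    unfolding row_idx_def by (rule bij_betw_shift_mod[OF s])
  have bij_col_idx: "bij_betw col_idx {1..s} {..<s}"
    unfolding col_idx_def by (rule bij_betw_shift_mod[OF s])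
  have "bij_betw (row_after \<circ> (bullet \<circ> row_idx)) {1..s} Frows"
    using bij_betw_trans[OF bij_betw_trans[OF bij_row_idx bij_bullet] bij_betw_row_after[OF ne]] .
  moreover have "bij_betw (bullet \<circ> col_idx) {1..s} Lcols"
    using bij_col_idx bij_bullet by (rule bij_betw_trans)
  moreover have "A (row_after (bullet (row_idx a))) (bullet (col_idx b)) \<longleftrightarrow> circulant s p a b"
    if a: "a \<in> {1..s}" and b: "b \<in> {1..s}" for a b
  proof -
    have "row_idx a < s" "col_idx b < s"
      using bij_row_idx bij_col_idx a b unfolding bij_betw_def by auto
    then have "A (row_after (bullet (row_idx a))) (bullet (col_idx b))
        \<longleftrightarrow> (int (col_idx b) - int (row_idx a) - 1) mod int s < p"
      using row_after_covers_iff[OF ne] bullet by simp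
    also have "(int (col_idx b) - int (row_idx a) - 1) mod int s
        = ((int b - 1) mod int s - (int a - 2) mod int s - 1) mod int s"
      using s unfolding row_idx_def col_idx_def by simp
    also have "\<dots> = ((int b - 1) - (int a - 2) - 1) mod int s"
      by (metis mod_diff_eq mod_diff_left_eq)
    also have "\<dots> = (int b - int a) mod int s" by (simp add: algebra_simps)
    finally show ?thesis unfolding circulant_def .
  qed
  ultimately show ?thesis unfolding comp_def by blast
qed

lemma rank_from_last_covered_bullet:
  assumes i: "i \<in> Frows" and b: "last_covered_bullet i b"
  shows "int (rank_from (l i) b) = p - 1"
proof -
  have i1: "i \<in> {1..m}" using i Frows_subset by auto
  have bL: "b \<in> Lcols" "A i b" using b unfolding last_covered_bullet_def by auto
  have bn: "b \<in> {1..n}" using bL Lcols_subset by auto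
  have S: "{c\<in>Lcols. cdist n (l i) c < cdist n (l i) b} = {c\<in>Lcols. A i c} - {b}"
  proof
    show "{c\<in>Lcols. cdist n (l i) c < cdist n (l i) b} \<subseteq> {c\<in>Lcols. A i c} - {b}"
      using A_iff_cdist[OF i1] bL(2) A_iff_cdist[OF i1 bn] Lcols_subset by fastforce
    show "{c\<in>Lcols. A i c} - {b} \<subseteq> {c\<in>Lcols. cdist n (l i) c < cdist n (l i) b}"
    proof
      fix c assume c: "c \<in> {c\<in>Lcols. A i c} - {b}"
      then have "cdist n (l i) c \<le> cdist n (l i) b" using b unfolding last_covered_bullet_def by blast
      moreover have "cdist n (l i) c \<noteq> cdist n (l i) b"
        using cdist_inj[OF _ bn] c Lcols_subset by blast
      ultimately show "c \<in> {c\<in>Lcols. cdist n (l i) c < cdist n (l i) b}" using c by simp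
    qed
  qed
  have "rank_from (l i) b = card {c\<in>Lcols. A i c} - 1"
    unfolding rank_from_def S using bL finite_Lcols by simp
  moreover have "card {c\<in>Lcols. A i c} \<ge> 1"
    using bL finite_Lcols card_gt_0_iff[of "{c\<in>Lcols. A i c}"] by fastforce
  ultimately show ?thesis using card_covered_bullets[OF i] by linarith
qed

lemma rank_start_next_row:
  assumes "t < t'" "t' < len" "arc_at t = RowArc i" "arc_at t' = RowArc j"
    and "\<forall>v. t < v \<and> v < t' \<longrightarrow> \<not> is_row (arc_at v)"
  shows "int (rank (l j)) mod int s = (int (rank (l i)) + p) mod int s"
proof -
  obtain b where b: "last_covered_bullet i b" "last_bullet_before b j"
    using last_covered_bullet_before_next_row[OF assms] by blast
  have i: "i \<in> Frows" and j: "j \<in> Frows" using RowArc_in_Frows assms(3,4) by blast+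
  have bL: "b \<in> Lcols" using b unfolding last_covered_bullet_def by simp
  have "(int (rank b) - int (rank (l i))) mod int s = p - 1"
    using rank_from_eq_mod[OF start_in_range[OF i] bL] rank_from_last_covered_bullet[OF i b(1)] by simp
  then have "(int (rank (l i)) + p) mod int s
      = (int (rank (l i)) + (int (rank b) - int (rank (l i))) mod int s + 1) mod int s"
    by simp
  also have "\<dots> = (int (rank b) + 1) mod int s" by (rule mod_add_mod_diff_add_one)
  finally show ?thesis using rank_start_eq_mod[OF bL j b(2)] by simp
qed

definition start_rank :: "nat \<Rightarrow> int" where
  "start_rank u = int (rank (l (arc_index (arc_at u))))"

lemma start_rank_cong_mod_gcd:
  assumes "u \<in> row_positions"
  shows "start_rank u mod gcd (int s) p = start_rank (Min row_positions) mod gcd (int s) p"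
  using assms
proof (induction u rule: less_induct)
  case (less u)
  let ?d = "gcd (int s) p"
  show ?case
  proof (cases "u = Min row_positions")
    case False
    then obtain v where v: "v \<in> row_positions" "v < u"
      and between: "\<forall>x. v < x \<and> x < u \<longrightarrow> \<not> is_row (arc_at x)"
      using exists_previous_row_position[OF less.prems] by blast
    obtain i j where ij: "arc_at v = RowArc i" "arc_at u = RowArc j"
      using v(1) less.prems unfolding row_positions_def by (metis is_row.elims(2) mem_Collect_eq)
    have "start_rank u mod int s = (start_rank v + p) mod int s"
      using rank_start_next_row[OF v(2) _ ij between] less.prems ij
      unfolding start_rank_def row_positions_def by simp
    then have "start_rank u mod ?d = (start_rank v + p) mod ?d"
      by (metis gcd_dvd1 mod_mod_cancel)
    also have "\<dots> = start_rank v mod ?d" by (simp add: mod_add_right_eq[symmetric])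
    finally show ?thesis using less.IH[OF v(2,1)] by simp
  qed simp
qed

lemma start_rank_inj_mod: "Frows \<noteq> {} \<Longrightarrow> inj_on (\<lambda>u. start_rank u mod int s) row_positions"
proof (rule inj_onI)
  fix u u' assume ne: "Frows \<noteq> {}" and u: "u \<in> row_positions" "u' \<in> row_positions"
    and eq: "start_rank u mod int s = start_rank u' mod int s"
  have rank_mod: "start_rank x mod int s = (int (rank c) + 1) mod int s"
    if "c \<in> Lcols" "arc_index (arc_at x) = row_after c" for x c
    using rank_start_eq_mod[OF that(1)] row_after_spec[OF ne that(1)] that(2) unfolding start_rank_def by simp
  have "arc_index (arc_at x) \<in> row_after ` Lcols" if "x \<in> row_positions" for x
    using that bij_betw_row_positions bij_betw_row_after[OF ne] unfolding bij_betw_def by blast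
  then obtain c c' where c: "c \<in> Lcols" "arc_index (arc_at u) = row_after c"
    and c': "c' \<in> Lcols" "arc_index (arc_at u') = row_after c'"
    using u by blast
  have "(int (rank c) + 1 - 1) mod int s = (int (rank c') + 1 - 1) mod int s"
    using eq rank_mod[OF c] rank_mod[OF c'] by (intro mod_diff_cong) simp_all
  then have "rank c = rank c'" using rank_less c c' by simp
  then have "c = c'" using bij_betw_rank c c' unfolding bij_betw_def inj_on_def by blast
  then have "arc_index (arc_at u) = arc_index (arc_at u')" using c c' by simp
  then show "u = u'" using bij_betw_row_positions u unfolding bij_betw_def inj_on_def by blast
qed

lemma coprime_card_winding:
  assumes ne: "Frows \<noteq> {}" shows "gcd (int s) p = 1"
proof -
  let ?d = "gcd (int s) p"
  have s: "0 < int s" using ne finite_Frows by (simp add: card_gt_0_iff)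
  have d: "0 < ?d" "?d dvd int s" using s by auto
  have "finite row_positions" unfolding row_positions_def by simp
  moreover have "\<forall>u\<in>row_positions. start_rank u mod ?d = start_rank (Min row_positions) mod ?d"
    using start_rank_cong_mod_gcd by blast
  ultimately have "int (card row_positions) \<le> int s div ?d"
    using card_le_if_distinct_mod_and_cong[OF _ s d start_rank_inj_mod[OF ne]] by blast
  then have "int s \<le> int s div ?d" using bij_betw_same_card[OF bij_betw_row_positions] by simp
  then have "\<not> 1 < ?d" using s int_div_less_self[OF s] by (meson not_le)
  then show ?thesis using d(1) by linarith
qed

end

theorem corollary7p3:
  fixes m n :: nat and A :: "nat \<Rightarrow> nat \<Rightarrow> bool" and l k :: "nat \<Rightarrow> nat"
    and G :: "arc list" and p :: int
  assumes circ: "circular_with m n A l k"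
    and nodom: "no_dominating_rows m n A"
    and circuit: "is_circuit m n l k G"
    and nondeg: "\<not> (\<exists>j. set G = {Fwd j, Rev j})"
    and wind: "winding_number n k G p"
  shows "(\<exists>\<sigma> \<tau>. bij_betw \<sigma> {1..card (row_arc_rows m G)} (row_arc_rows m G) \<and>
            bij_betw \<tau> {1..card (row_arc_rows m G)} (essential_bullets n l k G) \<and>
            (\<forall>a\<in>{1..card (row_arc_rows m G)}. \<forall>b\<in>{1..card (row_arc_rows m G)}.
               A (\<sigma> a) (\<tau> b) \<longleftrightarrow> circulant (card (row_arc_rows m G)) p a b))
         \<and> gcd (int (card (row_arc_rows m G))) p = 1"
proof -
  interpret circuit_without_dominating_rows m n A l k G p
    using assms by unfold_locales
  show ?thesis
  proof (cases "Frows = {}")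
    case True
    then have "Lcols = {}" using card_Lcols finite_Lcols by simp
    moreover have "p = 1 \<or> p = -1" using winding_unit_if_no_rows[OF True] .
    ultimately show ?thesis using True by auto
  next
    case False
    then show ?thesis using submatrix_circulant coprime_card_winding by blast
  qed
qed

end
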